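(* For every Stackelberg game $(G,L,F)$, $\mathcal{X}^S\subseteq\mathcal{X}^{S\text{-}NF}$ and $\mathcal{X}^{PS}\subseteq\mathcal{X}^{PS\text{-}NF}$, where $\mathcal{X}^S,\mathcal{X}^{PS}$ refer to $(G,L,F)$ and $\mathcal{X}^{S\text{-}NF},\mathcal{X}^{PS\text{-}NF}$ refer to $(G,N,\emptyset)$.
   Context: A finite game is $G=(N,\{S_p\}_{p\in N},\{u_p\}_{p\in N})$ with players $N=\{1,\dots,n\}$, finite nonempty strategy sets $S_p$, and utilities $u_p:S\to\mathbb{R}$ on $S=\prod_{p\in N}S_p$; write $s=(s_p,s_{-p})$ with $s_{-p}\in S_{-p}=\prod_{q\neq p}S_q$. $\mathcal{X}=\Delta(S)$ is the set of probability distributions on $S$ and $u_p(x)=\sum_{s\in S}x(s)u_p(s)$ for $x\in\mathcal{X}$. For $P\subseteq N$, $\mathcal{X}^{CE}_P$ is the set of $x\in\mathcal{X}$ such that for every $p\in P$ and all $s_p\neq s_p'\in S_p$: $\sum_{s_{-p}\in S_{-p}} x(s_p,s_{-p})\,(u_p(s_p,s_{-p})-u_p(s_p',s_{-p}))\ge 0$; $\mathcal{X}^{CE}=\mathcal{X}^{CE}_N$ is the set of correlated equilibria of $G$. A Stackelberg game (SG) is a triple $(G,L,F)$ with $L\cup F=N$ and $L\cap F=\emptyset$ (leaders and followers). For $P\subseteq N$, $\Pi_P$ is the set of ordered subsets of $P$ (finite sequences of pairwise distinct elements of $P$, including the empty sequence $\varnothing$); for $\pi\in\Pi_P$ and $p\in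 P$ not occurring in $\pi$, $\pi p$ is $\pi$ with $p$ appended; when used as a set, $\pi$ means its set of entries. $\mathbf{X}=\prod_{\pi\in\Pi_L}\mathcal{X}^{CE}_{\pi\cup F}$, with elements $\mathbf{x}=[x_\pi]_{\pi\in\Pi_L}$. For $\mathbf{x}\in\mathbf{X}$ and $\pi\in\Pi_L$, $x_\pi$ is stable if $u_p(x_\pi)\ge u_p(x_{\pi p})$ for all $p\in L\setminus\pi$; $\mathbf{x}$ is stable if $x_\varnothing$ is stable, and perfectly stable if $x_\pi$ is stable for every $\pi\in\Pi_L$; $\mathbf{X}^{S}$ and $\mathbf{X}^{PS}$ denote the sets of stable and perfectly stable elements of $\mathbf{X}$. $\mathcal{X}^S=\{x_\varnothing:\mathbf{x}\in\mathbf{X}^S\}$ and $\mathcal{X}^{PS}=\{x_\varnothing:\mathbf{x}\in\mathbf{X}^{PS}\}$ (for the given SG). $\mathcal{X}^{S\text{-}NF}$ and $\mathcal{X}^{PS\text{-}NF}$ are the sets $\mathcal{X}^S$ and $\mathcal{X}^{PS}$ computed for the SG $(G,N,\emptyset)$ in which every player is a leader. *)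

theory Defs
  imports Complex_Main "HOL-Library.FuncSet"
begin

text \<open>A finite game: players are the elements of a finite type 'p (N = UNIV),
  strategy sets S p :: 'a set, utilities u p :: ('p \<Rightarrow> 'a) \<Rightarrow> real on profiles.\<close>

definition profiles :: "('p \<Rightarrow> 'a set) \<Rightarrow> ('p \<Rightarrow> 'a) set" where
  "profiles S = PiE UNIV S"

definition finite_game :: "('p::finite \<Rightarrow> 'a set) \<Rightarrow> bool" where
  "finite_game S \<longleftrightarrow> (\<forall>p. finite (S p) \<and> S p \<noteq> {})"

definition distributions :: "('p \<Rightarrow> 'a set) \<Rightarrow> (('p \<Rightarrow> 'a) \<Rightarrow> real) set" where
  "distributions S = {x. (\<forall>s\<in>profiles S. 0 \<le> x s) \<and> (\<forall>s. s \<notin> profiles S \<longrightarrow> x s = 0)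
                         \<and> (\<Sum>s\<in>profiles S. x s) = 1}"

definition exp_util :: "('p \<Rightarrow> 'a set) \<Rightarrow> ('p \<Rightarrow> ('p \<Rightarrow> 'a) \<Rightarrow> real) \<Rightarrow> 'p
    \<Rightarrow> (('p \<Rightarrow> 'a) \<Rightarrow> real) \<Rightarrow> real" where
  "exp_util S u p x = (\<Sum>s\<in>profiles S. x s * u p s)"

text \<open>X^CE_P. The sum over s_{-p} with s_p fixed is the sum over profiles s with s p = s_p;
  (s_p', s_{-p}) is s(p := s_p').\<close>
definition CE_set :: "('p \<Rightarrow> 'a set) \<Rightarrow> ('p \<Rightarrow> ('p \<Rightarrow> 'a) \<Rightarrow> real) \<Rightarrow> 'p set
    \<Rightarrow> (('p \<Rightarrow> 'a) \<Rightarrow> real) set" where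
  "CE_set S u P = {x \<in> distributions S.
     \<forall>p\<in>P. \<forall>sp\<in>S p. \<forall>sp'\<in>S p. sp \<noteq> sp' \<longrightarrow>
       0 \<le> (\<Sum>s\<in>{s\<in>profiles S. s p = sp}. x s * (u p s - u p (s(p := sp'))))}"

definition ordered_subsets :: "'p set \<Rightarrow> 'p list set" where
  "ordered_subsets P = {\<pi>. distinct \<pi> \<and> set \<pi> \<subseteq> P}"

text \<open>Bold X: families [x_pi]_{pi in Pi_L} with x_pi in X^CE_{pi union F}
  (values at lists outside Pi_L are irrelevant and left unconstrained).\<close>
definition Xbold :: "('p \<Rightarrow> 'a set) \<Rightarrow> ('p \<Rightarrow> ('p \<Rightarrow> 'a) \<Rightarrow> real) \<Rightarrow> 'p set \<Rightarrow> 'p set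
    \<Rightarrow> ('p list \<Rightarrow> (('p \<Rightarrow> 'a) \<Rightarrow> real)) set" where
  "Xbold S u L F = {X. \<forall>\<pi>\<in>ordered_subsets L. X \<pi> \<in> CE_set S u (set \<pi> \<union> F)}"

definition stable_at :: "('p \<Rightarrow> 'a set) \<Rightarrow> ('p \<Rightarrow> ('p \<Rightarrow> 'a) \<Rightarrow> real) \<Rightarrow> 'p set
    \<Rightarrow> ('p list \<Rightarrow> (('p \<Rightarrow> 'a) \<Rightarrow> real)) \<Rightarrow> 'p list \<Rightarrow> bool" where
  "stable_at S u L X \<pi> \<longleftrightarrow>
     (\<forall>p\<in>L - set \<pi>. exp_util S u p (X \<pi>) \<ge> exp_util S u p (X (\<pi> @ [p])))"

definition stable :: "('p \<Rightarrow> 'a set) \<Rightarrow> ('p \<Rightarrow> ('p \<Rightarrow> 'a) \<Rightarrow> real) \<Rightarrow> 'p set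
    \<Rightarrow> ('p list \<Rightarrow> (('p \<Rightarrow> 'a) \<Rightarrow> real)) \<Rightarrow> bool" where
  "stable S u L X \<longleftrightarrow> stable_at S u L X []"

definition perfectly_stable :: "('p \<Rightarrow> 'a set) \<Rightarrow> ('p \<Rightarrow> ('p \<Rightarrow> 'a) \<Rightarrow> real) \<Rightarrow> 'p set
    \<Rightarrow> ('p list \<Rightarrow> (('p \<Rightarrow> 'a) \<Rightarrow> real)) \<Rightarrow> bool" where
  "perfectly_stable S u L X \<longleftrightarrow> (\<forall>\<pi>\<in>ordered_subsets L. stable_at S u L X \<pi>)"

definition XS :: "('p \<Rightarrow> 'a set) \<Rightarrow> ('p \<Rightarrow> ('p \<Rightarrow> 'a) \<Rightarrow> real) \<Rightarrow> 'p set \<Rightarrow> 'p set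
    \<Rightarrow> (('p \<Rightarrow> 'a) \<Rightarrow> real) set" where
  "XS S u L F = {X [] | X. X \<in> Xbold S u L F \<and> stable S u L X}"

definition XPS :: "('p \<Rightarrow> 'a set) \<Rightarrow> ('p \<Rightarrow> ('p \<Rightarrow> 'a) \<Rightarrow> real) \<Rightarrow> 'p set \<Rightarrow> 'p set
    \<Rightarrow> (('p \<Rightarrow> 'a) \<Rightarrow> real) set" where
  "XPS S u L F = {X [] | X. X \<in> Xbold S u L F \<and> perfectly_stable S u L X}"

end

theory Submission
  imports Defs
begin

text \<open>A family \<open>x\<close> for \<open>(G, L, F)\<close> becomes one for \<open>(G, N, \<emptyset>)\<close> by letting a
  follower's commitment change nothing: put \<open>y \<pi> = x (\<pi> \<inter> L)\<close>, where \<open>\<pi> \<inter> L\<close> keeps the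
  leaders of \<open>\<pi>\<close> in order. Since \<open>(\<pi> \<inter> L) \<union> F \<supseteq> \<pi>\<close>, each \<open>y \<pi>\<close> satisfies the
  correlated-equilibrium constraints of all players in \<open>\<pi>\<close>. Stability of \<open>y \<pi>\<close> against
  a leader \<open>p\<close> is stability of \<open>x (\<pi> \<inter> L)\<close> against \<open>p\<close>; against a follower it is
  trivial, because \<open>y (\<pi> p) = y \<pi>\<close>. Both families have the same entry at \<open>\<pi> = \<emptyset>\<close>.\<close>

definition restrict_to_leaders ::
    "'p set \<Rightarrow> ('p list \<Rightarrow> (('p \<Rightarrow> 'a) \<Rightarrow> real)) \<Rightarrow> 'p list \<Rightarrow> (('p \<Rightarrow> 'a) \<Rightarrow> real)" where
  "restrict_to_leaders L X \<pi> = X (filter (\<lambda>q. q \<in> L) \<pi>)"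

lemma CE_set_antimono: "P \<subseteq> Q \<Longrightarrow> CE_set S u Q \<subseteq> CE_set S u P"
  unfolding CE_set_def by blast

lemma ordered_subsets_filter:
  "\<pi> \<in> ordered_subsets P \<Longrightarrow> filter (\<lambda>q. q \<in> L) \<pi> \<in> ordered_subsets L"
  by (auto simp: ordered_subsets_def)

lemma restrict_to_leaders_in_Xbold:
  fixes L F :: "'p set"
  assumes "L \<union> F = UNIV" and "X \<in> Xbold S u L F"
  shows "restrict_to_leaders L X \<in> Xbold S u UNIV {}"
  unfolding Xbold_def
proof (intro CollectI ballI)
  fix \<pi> :: "'p list"
  assume "\<pi> \<in> ordered_subsets UNIV"
  then have "filter (\<lambda>q. q \<in> L) \<pi> \<in> ordered_subsets L"
    by (rule ordered_subsets_filter)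
  then have "restrict_to_leaders L X \<pi> \<in> CE_set S u (set (filter (\<lambda>q. q \<in> L) \<pi>) \<union> F)"
    using assms(2) unfolding Xbold_def restrict_to_leaders_def by blast
  moreover have "set \<pi> \<union> {} \<subseteq> set (filter (\<lambda>q. q \<in> L) \<pi>) \<union> F"
    using assms(1) by auto
  ultimately show "restrict_to_leaders L X \<pi> \<in> CE_set S u (set \<pi> \<union> {})"
    using CE_set_antimono by blast
qed

lemma stable_at_restrict_to_leaders:
  assumes "stable_at S u L X (filter (\<lambda>q. q \<in> L) \<pi>)"
  shows "stable_at S u UNIV (restrict_to_leaders L X) \<pi>"
  unfolding stable_at_def
proof
  fix p
  assume p: "p \<in> UNIV - set \<pi>"
  show "exp_util S u p (restrict_to_leaders L X \<pi>)
          \<ge> exp_util S u p (restrict_to_leaders L X (\<pi> @ [p]))"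
  proof (cases "p \<in> L")
    case True
    with p have "p \<in> L - set (filter (\<lambda>q. q \<in> L) \<pi>)" by auto
    with assms True show ?thesis by (simp add: stable_at_def restrict_to_leaders_def)
  qed (simp add: restrict_to_leaders_def)
qed

lemma stable_restrict_to_leaders:
  "stable S u L X \<Longrightarrow> stable S u UNIV (restrict_to_leaders L X)"
  using stable_at_restrict_to_leaders[of S u L X "[]"] by (simp add: stable_def)

lemma perfectly_stable_restrict_to_leaders:
  fixes L :: "'p set"
  assumes "perfectly_stable S u L X"
  shows "perfectly_stable S u UNIV (restrict_to_leaders L X)"
  unfolding perfectly_stable_def
proof
  fix \<pi> :: "'p list"
  assume "\<pi> \<in> ordered_subsets UNIV"
  then have "filter (\<lambda>q. q \<in> L) \<pi> \<in> ordered_subsets L"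
    by (rule ordered_subsets_filter)
  with assms show "stable_at S u UNIV (restrict_to_leaders L X) \<pi>"
    by (simp add: perfectly_stable_def stable_at_restrict_to_leaders)
qed

lemma XS_subset_XS_all_leaders:
  assumes "L \<union> F = UNIV"
  shows "XS S u L F \<subseteq> XS S u UNIV {}"
proof
  fix x
  assume "x \<in> XS S u L F"
  then obtain X where "x = X []" "X \<in> Xbold S u L F" "stable S u L X"
    unfolding XS_def by blast
  with assms have "x = restrict_to_leaders L X []"
    and "restrict_to_leaders L X \<in> Xbold S u UNIV {}"
    and "stable S u UNIV (restrict_to_leaders L X)"
    by (simp_all add: restrict_to_leaders_def restrict_to_leaders_in_Xbold
        stable_restrict_to_leaders)
  then show "x \<in> XS S u UNIV {}"
    unfolding XS_def by blast
qed

lemma XPS_subset_XPS_all_leaders: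
  assumes "L \<union> F = UNIV"
  shows "XPS S u L F \<subseteq> XPS S u UNIV {}"
proof
  fix x
  assume "x \<in> XPS S u L F"
  then obtain X where "x = X []" "X \<in> Xbold S u L F" "perfectly_stable S u L X"
    unfolding XPS_def by blast
  with assms have "x = restrict_to_leaders L X []"
    and "restrict_to_leaders L X \<in> Xbold S u UNIV {}"
    and "perfectly_stable S u UNIV (restrict_to_leaders L X)"
    by (simp_all add: restrict_to_leaders_def restrict_to_leaders_in_Xbold
        perfectly_stable_restrict_to_leaders)
  then show "x \<in> XPS S u UNIV {}"
    unfolding XPS_def by blast
qed

theorem mainTheorem14:
  fixes S :: "'p::finite \<Rightarrow> 'a set"
    and u :: "'p \<Rightarrow> ('p \<Rightarrow> 'a) \<Rightarrow> real"
    and L F :: "'p set"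
  assumes "finite_game S"
    and "L \<union> F = UNIV"
    and "L \<inter> F = {}"
  shows "XS S u L F \<subseteq> XS S u UNIV {} \<and> XPS S u L F \<subseteq> XPS S u UNIV {}"
  using XS_subset_XS_all_leaders[OF assms(2)] XPS_subset_XPS_all_leaders[OF assms(2)]
  by blast

end
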